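(* Let $X\subseteq\mathscr{A}^\infty$ be a shift space and suppose there is a sequence $(X_n)_{n=1}^\infty$ of shift spaces over $\mathscr{A}$, each with the $\bar d$-shadowing property, such that $X\subseteq X_n$ for every $n$ and $\bar d^H(X,X_n)\to0$ as $n\to\infty$. Then $X$ has the $\bar d$-shadowing property.
   Context: Shift spaces are nonempty closed shift-invariant subsets of $\mathscr{A}^\infty=\mathscr{A}^{\mathbb N_0}$, $\mathscr{A}$ finite; $\mathcal L(X)$ is the set of finite words appearing in $X$. $\bar d(x,y)=\limsup_{n\to\infty}\frac1n|\{0\le j<n:x_j\ne y_j\}|$ and $\bar d^H$ is its Hausdorff distance on nonempty subsets: $\bar d^H(A,B)=\max\{\sup_{a\in A}\inf_{b\in B}\bar d(a,b),\sup_{b\in B}\inf_{a\in A}\bar d(a,b)\}$. $X$ has the $\bar d$-shadowing property if for every $\varepsilon>0$ there is $N$ such that for every sequence $(w^{(j)})_{j\ge1}$ in $\mathcal L(X)$ with $|w^{(j)}|\ge N$ there is $x'\in X$ with $\bar d(w^{(1)}w^{(2)}\cdots,x')<\varepsilon$. *)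

theory Defs
  imports "HOL-Analysis.Analysis"
begin

definition shift :: "(nat \<Rightarrow> 'a) \<Rightarrow> (nat \<Rightarrow> 'a)" where
  "shift x = (\<lambda>n. x (Suc n))"

definition shift_space :: "(nat \<Rightarrow> 'a::finite) set \<Rightarrow> bool" where
  "shift_space X \<longleftrightarrow> X \<noteq> {}
     \<and> closedin (product_topology (\<lambda>_::nat. discrete_topology (UNIV::'a set)) UNIV) X
     \<and> shift ` X \<subseteq> X"

definition language :: "(nat \<Rightarrow> 'a) set \<Rightarrow> 'a list set" where
  "language X = {w. \<exists>x\<in>X. \<exists>i. w = map x [i..<i + length w]}"

definition dbar :: "(nat \<Rightarrow> 'a) \<Rightarrow> (nat \<Rightarrow> 'a) \<Rightarrow> real" where
  "dbar x y = real_of_ereal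
     (limsup (\<lambda>n. ereal (real (card {j. j < n \<and> x j \<noteq> y j}) / real n)))"

definition dbarH :: "(nat \<Rightarrow> 'a) set \<Rightarrow> (nat \<Rightarrow> 'a) set \<Rightarrow> real" where
  "dbarH A B = max (SUP a\<in>A. INF b\<in>B. dbar a b) (SUP b\<in>B. INF a\<in>A. dbar a b)"

text \<open>Concatenation w 0 w 1 w 2 ... of an infinite sequence of (nonempty) words.\<close>
definition concat_inf :: "(nat \<Rightarrow> 'a list) \<Rightarrow> nat \<Rightarrow> 'a" where
  "concat_inf w n = (let k = (LEAST k. n < (\<Sum>i<Suc k. length (w i)))
                     in w k ! (n - (\<Sum>i<k. length (w i))))"

definition dbar_shadowing :: "(nat \<Rightarrow> 'a) set \<Rightarrow> bool" where
  "dbar_shadowing X \<longleftrightarrow> (\<forall>\<epsilon>>0. \<exists>N\<ge>1. \<forall>w::nat \<Rightarrow> 'a list.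
      (\<forall>j. w j \<in> language X \<and> length (w j) \<ge> N) \<longrightarrow>
      (\<exists>x'\<in>X. dbar (concat_inf w) x' < \<epsilon>))"

end

theory Submission
  imports Defs
begin

text \<open>Given \<open>\<epsilon>\<close>, pick \<open>n\<close> with
  \<open>dbarH X (Xs n) < \<epsilon>/2\<close> and use the shadowing constant of \<open>Xs n\<close> for \<open>\<epsilon>/2\<close>: since
  \<open>X \<subseteq> Xs n\<close>, words of \<open>X\<close> are words of \<open>Xs n\<close>, so their concatenation is \<open>\<epsilon>/2\<close>-close to
  some point of \<open>Xs n\<close>, which in turn is \<open>\<epsilon>/2\<close>-close to a point of \<open>X\<close> by the
  Hausdorff bound.\<close>

definition mismatch_freq :: "(nat \<Rightarrow> 'a) \<Rightarrow> (nat \<Rightarrow> 'a) \<Rightarrow> nat \<Rightarrow> real" where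
  "mismatch_freq x y n = real (card {j. j < n \<and> x j \<noteq> y j}) / real n"

lemma mismatch_freq_nonneg: "0 \<le> mismatch_freq x y n"
  unfolding mismatch_freq_def by simp

lemma mismatch_freq_le_1: "mismatch_freq x y n \<le> 1"
proof -
  have "card {j. j < n \<and> x j \<noteq> y j} \<le> card {..<n}"
    by (rule card_mono) auto
  then show ?thesis
    unfolding mismatch_freq_def by (cases "n = 0") (auto simp: field_simps)
qed

lemma mismatch_freq_triangle:
  "mismatch_freq x z n \<le> mismatch_freq x y n + mismatch_freq y z n"
proof -
  have "card {j. j < n \<and> x j \<noteq> z j}
      \<le> card ({j. j < n \<and> x j \<noteq> y j} \<union> {j. j < n \<and> y j \<noteq> z j})"
    by (rule card_mono) auto
  also have "\<dots> \<le> card {j. j < n \<and> x j \<noteq> y j} + card {j. j < n \<and> y j \<noteq> z j}"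
    by (rule card_Un_le)
  finally show ?thesis
    unfolding mismatch_freq_def add_divide_distrib[symmetric]
    by (intro divide_right_mono) simp_all
qed

lemma limsup_mismatch_freq_bounds:
  "0 \<le> limsup (\<lambda>n. ereal (mismatch_freq x y n))"
  "limsup (\<lambda>n. ereal (mismatch_freq x y n)) \<le> 1"
  by (auto intro!: le_Limsup Limsup_bounded simp: mismatch_freq_nonneg mismatch_freq_le_1)
lemma dbar_eq_limsup_mismatch_freq:
  "dbar x y = real_of_ereal (limsup (\<lambda>n. ereal (mismatch_freq x y n)))"
  unfolding dbar_def mismatch_freq_def ..

lemma dbar_nonneg: "0 \<le> dbar x y"
  using limsup_mismatch_freq_bounds[of x y]
  by (simp add: dbar_eq_limsup_mismatch_freq real_of_ereal_pos)

lemma dbar_le_1: "dbar x y \<le> 1"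
  using limsup_mismatch_freq_bounds[of x y] unfolding dbar_eq_limsup_mismatch_freq
  by (cases "limsup (\<lambda>n. ereal (mismatch_freq x y n))") auto

lemma dbar_commute: "dbar x y = dbar y x"
  unfolding dbar_def by (simp add: eq_commute)

lemma dbar_triangle: "dbar x z \<le> dbar x y + dbar y z"
proof -
  let ?L = "\<lambda>x y. limsup (\<lambda>n. ereal (mismatch_freq x y n))"
  have "?L x z \<le> limsup (\<lambda>n. ereal (mismatch_freq x y n) + ereal (mismatch_freq y z n))"
    by (rule Limsup_mono) (simp add: mismatch_freq_triangle)
  also have "\<dots> \<le> ?L x y + ?L y z"
    by (rule ereal_limsup_add_mono)
  finally have "?L x z \<le> ?L x y + ?L y z" .
  with limsup_mismatch_freq_bounds[of x z] limsup_mismatch_freq_bounds[of x y]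
    limsup_mismatch_freq_bounds[of y z]
  show ?thesis unfolding dbar_eq_limsup_mismatch_freq
    by (cases "?L x z"; cases "?L x y"; cases "?L y z") auto
qed
lemma language_mono: "A \<subseteq> B \<Longrightarrow> language A \<subseteq> language B"
  unfolding language_def by blast

lemma dbarH_close_point:
  assumes "A \<noteq> {}" "b \<in> B" "dbarH A B < \<epsilon>"
  obtains a where "a \<in> A" "dbar a b < \<epsilon>"
proof -
  have bdd_below: "bdd_below ((\<lambda>a. dbar a b') ` A)" for b'
    by (rule bdd_belowI2) (rule dbar_nonneg)
  have inf_le_1: "(INF a\<in>A. dbar a b') \<le> 1" for b'
  proof -
    from assms(1) obtain a where "a \<in> A" by blast
    with bdd_below show ?thesis
      by (rule cINF_lower2) (rule dbar_le_1)
  qed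
  have "(INF a\<in>A. dbar a b) \<le> (SUP b\<in>B. INF a\<in>A. dbar a b)"
    using assms(2) by (rule cSUP_upper) (rule bdd_aboveI2, rule inf_le_1)
  also have "\<dots> \<le> dbarH A B"
    unfolding dbarH_def by simp
  finally have "(INF a\<in>A. dbar a b) < \<epsilon>"
    using assms(3) by linarith
  then show thesis
    using cINF_less_iff[OF assms(1) bdd_below] that by blast
qed
lemma dbar_shadowing_of_dbarH_approx:
  assumes "X \<noteq> {}"
    and approx: "\<And>\<epsilon>. \<epsilon> > 0 \<Longrightarrow> \<exists>Y. X \<subseteq> Y \<and> dbar_shadowing Y \<and> dbarH X Y < \<epsilon>"
  shows "dbar_shadowing X"
  unfolding dbar_shadowing_def
proof (intro allI impI)
  fix \<epsilon> :: real
  assume "\<epsilon> > 0"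
  then obtain Y where XY: "X \<subseteq> Y" and "dbar_shadowing Y" and YX: "dbarH X Y < \<epsilon>/2"
    using approx[of "\<epsilon>/2"] by auto
  from \<open>dbar_shadowing Y\<close> obtain N where "N \<ge> 1" and shadow: "\<And>w. \<forall>j. w j \<in> language Y \<and> length (w j) \<ge> N
      \<Longrightarrow> \<exists>y\<in>Y. dbar (concat_inf w) y < \<epsilon>/2"
    using half_gt_zero[OF \<open>\<epsilon> > 0\<close>] unfolding dbar_shadowing_def by blast
  have "\<exists>x\<in>X. dbar (concat_inf w) x < \<epsilon>"
    if w: "\<forall>j. w j \<in> language X \<and> length (w j) \<ge> N" for w
  proof -
    have "\<forall>j. w j \<in> language Y \<and> length (w j) \<ge> N"
      using w language_mono[OF XY] by blast
    then obtain y where "y \<in> Y" and wy: "dbar (concat_inf w) y < \<epsilon>/2"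
      using shadow by blast
    then obtain x where "x \<in> X" and xy: "dbar x y < \<epsilon>/2"
      using dbarH_close_point[OF \<open>X \<noteq> {}\<close> _ YX] by blast
    have "dbar (concat_inf w) x \<le> dbar (concat_inf w) y + dbar y x"
      by (rule dbar_triangle)
    also have "\<dots> < \<epsilon>"
      using wy xy dbar_commute[of x y] by linarith
    finally show ?thesis
      using \<open>x \<in> X\<close> by blast
  qed
  with \<open>N \<ge> 1\<close> show "\<exists>N\<ge>1. \<forall>w. (\<forall>j. w j \<in> language X \<and> length (w j) \<ge> N) \<longrightarrow>
      (\<exists>x\<in>X. dbar (concat_inf w) x < \<epsilon>)"
    by blast
qed

theorem mainTheorem5:
  fixes X :: "(nat \<Rightarrow> 'a::finite) set" and Xs :: "nat \<Rightarrow> (nat \<Rightarrow> 'a) set"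
  assumes "shift_space X"
    and "\<And>n. shift_space (Xs n)"
    and "\<And>n. dbar_shadowing (Xs n)"
    and "\<And>n. X \<subseteq> Xs n"
    and "(\<lambda>n. dbarH X (Xs n)) \<longlonglongrightarrow> 0"
  shows "dbar_shadowing X"
proof (rule dbar_shadowing_of_dbarH_approx)
  show "X \<noteq> {}"
    using assms(1) unfolding shift_space_def by blast
next
  fix \<epsilon> :: real
  assume "\<epsilon> > 0"
  with assms(5) have "\<forall>\<^sub>F n in sequentially. dbarH X (Xs n) < \<epsilon>"
    by (rule order_tendstoD(2))
  then obtain n where "dbarH X (Xs n) < \<epsilon>"
    unfolding eventually_sequentially by blast
  with assms(3,4) show "\<exists>Y. X \<subseteq> Y \<and> dbar_shadowing Y \<and> dbarH X Y < \<epsilon>"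
    by blast
qed

end
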